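(* Let $\alpha\ge\omega^\omega$ be a multiplicatively indecomposable ordinal. Then $\sup_{\alpha'<\alpha}\mathbf{w}(P_{\alpha'})\ge\alpha$.
   Context: For an ordinal $\alpha$, $P_\alpha=\{(\beta_0,\beta_1):\beta_0\le\beta_1<\alpha\}$ ordered componentwise ($(\beta_0,\beta_1)\le(\gamma_0,\gamma_1)$ iff $\beta_0\le\gamma_0$ and $\beta_1\le\gamma_1$); it is a wqo. $\mathbf{w}(A)$ (width) is the rank of the root of the well-founded tree of finite sequences of pairwise incomparable elements of $A$ (root: empty sequence, children: one-element extensions; rank $r(s)=\sup\{r(t)+1: t\text{ child of } s\}$). Multiplicatively indecomposable ordinals $\ge\omega$ are those of the form $\omega^{\omega^\gamma}$. *)

theory Defs
  imports Main
begin

text \<open>Ordinals are represented by well-order relations (Main's BNF_Wellorder theory):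
  an ordinal alpha is the order type of a well-order r; the ordinals alpha' < alpha are the
  order types of the initial segments underS r a, a in Field r.\<close>

text \<open>Lists of length n form a block of type omega^n, so the order type
  is omega^0 + omega^1 + omega^2 + ... = omega^omega.\<close>
definition omega_omega :: "nat list rel" where
  "omega_omega = lenlex less_than \<union> Id"

text \<open>Ordinal product of (the order types of) two well-orders: lexicographic order on
  Field R \<times> Field S, first component most significant. Its order type is ot(S) * ot(R).\<close>
definition oprod_wo :: "'a rel \<Rightarrow> 'b rel \<Rightarrow> ('a \<times> 'b) rel" where
  "oprod_wo R S = {((x1, y1), (x2, y2)).
     x1 \<in> Field R \<and> x2 \<in> Field R \<and> y1 \<in> Field S \<and> y2 \<in> Field S \<and>
     (((x1, x2) \<in> R \<and> x1 \<noteq> x2) \<or> (x1 = x2 \<and> (y1, y2) \<in> S))}"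

definition mult_indecomposable :: "'a rel \<Rightarrow> bool" where
  "mult_indecomposable r \<longleftrightarrow>
     (\<exists>a\<in>Field r. \<exists>b\<in>Field r. a \<noteq> b) \<and>
     (\<forall>a\<in>Field r. \<forall>b\<in>Field r.
        (oprod_wo (Restr r (underS r a)) (Restr r (underS r b)), r) \<in> ordLess)"

text \<open>Rank in a (well-founded) tree given by its child relation ch, compared with ordinals
  below ot(W): rank_ge ch W s b means rank(s) \<ge> ot(underS W b), defined by the recursion
  rank(s) \<ge> beta  iff  for every gamma < beta there is a child t of s with rank(t) \<ge> gamma
  (equivalent to rank(s) = sup { rank(t) + 1 : t child of s }).\<close>
inductive rank_ge :: "('n \<Rightarrow> 'n \<Rightarrow> bool) \<Rightarrow> 'b rel \<Rightarrow> 'n \<Rightarrow> 'b \<Rightarrow> bool"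
  for ch :: "'n \<Rightarrow> 'n \<Rightarrow> bool" and W :: "'b rel" where
  "\<forall>c\<in>underS W b. \<exists>t. ch s t \<and> rank_ge ch W t c \<Longrightarrow> rank_ge ch W s b"

definition incomparable :: "('x \<Rightarrow> 'x \<Rightarrow> bool) \<Rightarrow> 'x \<Rightarrow> 'x \<Rightarrow> bool" where
  "incomparable le x y \<longleftrightarrow> \<not> le x y \<and> \<not> le y x"

definition antichain_seq :: "('x \<Rightarrow> 'x \<Rightarrow> bool) \<Rightarrow> 'x set \<Rightarrow> 'x list \<Rightarrow> bool" where
  "antichain_seq le A xs \<longleftrightarrow> set xs \<subseteq> A \<and>
     (\<forall>i j. i < j \<and> j < length xs \<longrightarrow> incomparable le (xs ! i) (xs ! j))"

definition ac_child :: "('x \<Rightarrow> 'x \<Rightarrow> bool) \<Rightarrow> 'x set \<Rightarrow> 'x list \<Rightarrow> 'x list \<Rightarrow> bool" where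
  "ac_child le A s t \<longleftrightarrow> antichain_seq le A s \<and> antichain_seq le A t \<and> (\<exists>x. t = s @ [x])"

text \<open>width_gt le A W b:  w(A) > ot(underS W b), i.e. the root [] (whose rank is w(A)) has a
  child of rank \<ge> ot(underS W b).\<close>
definition width_gt :: "('x \<Rightarrow> 'x \<Rightarrow> bool) \<Rightarrow> 'x set \<Rightarrow> 'b rel \<Rightarrow> 'b \<Rightarrow> bool" where
  "width_gt le A W b \<longleftrightarrow> (\<exists>t. ac_child le A [] t \<and> rank_ge (ac_child le A) W t b)"

text \<open>P_{alpha'} for alpha' = ot(underS r a): pairs (b0,b1) with b0 \<le> b1 < alpha',
  ordered componentwise.\<close>
definition Pset :: "'a rel \<Rightarrow> 'a \<Rightarrow> ('a \<times> 'a) set" where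
  "Pset r a = {(x, y). (x, y) \<in> r \<and> (y, a) \<in> r \<and> y \<noteq> a}"

definition Ple :: "'a rel \<Rightarrow> 'a \<times> 'a \<Rightarrow> 'a \<times> 'a \<Rightarrow> bool" where
  "Ple r p q \<longleftrightarrow> (fst p, fst q) \<in> r \<and> (snd p, snd q) \<in> r"

end

theory Submission
  imports Defs
begin

(* Pick A < \<alpha> above both the given \<beta> and an \<omega>-sequence E 0 < E 1 < ..., which exists
   as \<omega>^\<omega> \<le> \<alpha>. By multiplicative indecomposability the lexicographic square A \<times> A embeds
   into \<alpha> via some g. Put X n = g (E 0, E n), G \<gamma> = g (E 1, \<gamma>) and \<alpha>' = g (E 3, E 0).
   Starting from (X 0, g (E 2, E 0)) and appending (X n, G \<gamma>_n) along any descending sequence of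
   \<gamma>_n < \<beta> gives antichains of P_\<alpha>', since first coordinates increase while second
   coordinates decrease. Hence that one-element antichain has rank \<ge> \<beta> in the tree of
   antichains, and w(P_\<alpha>') > \<beta>. *)

lemma embed_underS_mono:
  assumes "Well_order R" "embed R r f" "x \<in> underS R y"
  shows "f x \<in> underS r (f y)"
proof -
  have "y \<in> Field R" using assms(3) by (auto simp: underS_def Field_def)
  then show ?thesis using bij_betwE[OF embed_underS[OF assms(1,2)]] assms(3) by blast
qed

lemma antichain_seq_snoc:
  "antichain_seq le A (s @ [x]) \<longleftrightarrow>
     antichain_seq le A s \<and> x \<in> A \<and> (\<forall>z\<in>set s. incomparable le z x)"
proof -
  have "(\<forall>i j. i < j \<and> j < Suc (length s) \<longrightarrow> incomparable le ((s @ [x]) ! i) ((s @ [x]) ! j))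
      \<longleftrightarrow> (\<forall>i j. i < j \<and> j < length s \<longrightarrow> incomparable le (s ! i) (s ! j))
          \<and> (\<forall>i < length s. incomparable le (s ! i) x)"
    by (auto simp: nth_append less_Suc_eq)
  then show ?thesis
    by (auto simp: antichain_seq_def all_set_conv_all_nth)
qed

lemma omega_omega_ascending_bounded:
  fixes r :: "'a rel"
  assumes "(omega_omega, r) \<in> ordLeq"
  obtains E :: "nat \<Rightarrow> 'a" and W
  where "\<And>i j. i < j \<Longrightarrow> E i \<in> underS r (E j)" and "\<And>n. E n \<in> underS r W"
proof -
  obtain e where wo: "Well_order omega_omega" and e: "embed omega_omega r e"
    using assms unfolding ordLeq_def by blast
  have lt: "xs \<in> underS omega_omega ys"
    if "length xs < length ys \<or> length xs = length ys \<and> (xs, ys) \<in> lex less_than" for xs ys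
    using that lex_take_index[of xs ys less_than]
    by (auto simp: underS_def omega_omega_def lenlex_conv)
  show thesis
  proof (rule that[of "\<lambda>n. e [n]" "e [0, 0]"])
    show "e [i] \<in> underS r (e [j])" if "i < j" for i j
      using that by (intro embed_underS_mono[OF wo e] lt) auto
    show "e [n] \<in> underS r (e [0, 0])" for n
      by (intro embed_underS_mono[OF wo e] lt) auto
  qed
qed

definition lex_square_strict_mono :: "'a rel \<Rightarrow> 'a \<Rightarrow> ('a \<times> 'a \<Rightarrow> 'a) \<Rightarrow> bool" where
  "lex_square_strict_mono r A g \<longleftrightarrow>
     (\<forall>u u' v v'. u \<in> underS r u' \<longrightarrow> u' \<in> underS r A \<longrightarrow> v \<in> underS r A \<longrightarrow> v' \<in> underS r A
        \<longrightarrow> g (u, v) \<in> underS r (g (u', v'))) \<and>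
     (\<forall>u v v'. u \<in> underS r A \<longrightarrow> v \<in> underS r v' \<longrightarrow> v' \<in> underS r A
        \<longrightarrow> g (u, v) \<in> underS r (g (u, v')))"

lemma Pset_iff: "(x, y) \<in> Pset r a \<longleftrightarrow> (x, y) \<in> r \<and> y \<in> underS r a"
  by (auto simp: Pset_def underS_def)

context wo_rel
begin

lemma underS_trans: "x \<in> underS y \<Longrightarrow> y \<in> underS z \<Longrightarrow> x \<in> underS z"
  using TRANS ANTISYM unfolding underS_def trans_def antisym_def by blast

lemma underS_under_trans: "x \<in> underS y \<Longrightarrow> (y, z) \<in> r \<Longrightarrow> x \<in> underS z"
  using underS_incr[OF TRANS ANTISYM] by blast

lemma Ple_incomparable:
  assumes "x \<in> underS x'" and "y' \<in> underS y"
  shows "incomparable (Ple r) (x, y) (x', y')"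
  using assms ANTISYM unfolding incomparable_def Ple_def underS_def antisym_def by auto

lemma mult_indecomposable_lex_square:
  assumes "mult_indecomposable r" and "A \<in> Field r"
  obtains g where "lex_square_strict_mono r A g"
proof -
  define K where "K = Restr r (underS A)"
  have "(oprod_wo K K, r) \<in> ordLess"
    using assms unfolding mult_indecomposable_def K_def by blast
  then obtain g where wo: "Well_order (oprod_wo K K)" and g: "embed (oprod_wo K K) r g"
    unfolding ordLess_def embedS_def by blast
  have K: "x \<in> Field K" if "x \<in> underS A" for x
    using that REFL by (auto simp: K_def Field_def refl_on_def underS_def)
  have lex: "g (u, v) \<in> underS (g (u', v'))"
    if "u \<in> underS A" "u' \<in> underS A" "v \<in> underS A" "v' \<in> underS A"
      "u \<in> underS u' \<or> u = u' \<and> v \<in> underS v'" for u u' v v'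
  proof (rule embed_underS_mono[OF wo g])
    show "(u, v) \<in> Order_Relation.underS (oprod_wo K K) (u', v')"
      using that K by (auto simp: oprod_wo_def underS_def K_def)
  qed
  have "lex_square_strict_mono r A g"
    unfolding lex_square_strict_mono_def by (blast intro: lex underS_trans)
  then show thesis by (rule that)
qed

(* The invariants on s say that (X (length s), G c') is a legal continuation of s for every
   c' < c, and the extended sequence again satisfies them for c'. *)

lemma staircase_rank_ge:
  assumes X: "\<And>i j. i < j \<Longrightarrow> X i \<in> underS (X j)"
    and G: "\<And>c d. c \<in> underS d \<Longrightarrow> d \<in> underS A \<Longrightarrow> G c \<in> underS (G d)"
    and XG: "\<And>i c. c \<in> underS A \<Longrightarrow> (X i, G c) \<in> r"
    and Ga: "\<And>c. c \<in> underS A \<Longrightarrow> G c \<in> underS a"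
  shows "(c, A) \<in> r \<Longrightarrow> antichain_seq (Ple r) (Pset r a) s
    \<Longrightarrow> \<forall>z\<in>set s. fst z \<in> underS (X (length s))
    \<Longrightarrow> \<forall>z\<in>set s. \<forall>c'\<in>underS c. G c' \<in> underS (snd z)
    \<Longrightarrow> rank_ge (ac_child (Ple r) (Pset r a)) r s c"
proof (induction c arbitrary: s rule: wf_induct_rule[OF WF, case_names less])
  case (less c)
  show ?case
  proof (rule rank_ge.intros, intro ballI)
    fix c' assume c': "c' \<in> underS c"
    then have c'A: "c' \<in> underS A" using less.prems(1) by (rule underS_under_trans)
    define s' where "s' = s @ [(X (length s), G c')]"
    have "(X (length s), G c') \<in> Pset r a"
      using XG[OF c'A] Ga[OF c'A] by (simp add: Pset_iff)
    moreover have "incomparable (Ple r) z (X (length s), G c')" if "z \<in> set s" for z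
      using Ple_incomparable[of "fst z" _ "G c'" "snd z"] less.prems(3,4) c' that by simp
    ultimately have s': "antichain_seq (Ple r) (Pset r a) s'"
      using less.prems(2) by (simp add: s'_def antichain_seq_snoc)
    have "rank_ge (ac_child (Ple r) (Pset r a)) r s' c'"
    proof (rule less.IH)
      show "(c', c) \<in> r - Id" using c' by (simp add: underS_def)
      show "(c', A) \<in> r" using c'A by (simp add: underS_def)
      show "\<forall>z\<in>set s'. fst z \<in> underS (X (length s'))"
        using less.prems(3) X[of "length s" "Suc (length s)"]
        by (auto simp: s'_def intro: underS_trans)
      show "\<forall>z\<in>set s'. \<forall>c''\<in>underS c'. G c'' \<in> underS (snd z)"
        using less.prems(4) G c'A c' by (auto simp: s'_def intro: underS_trans)
    qed (fact s')
    moreover have "ac_child (Ple r) (Pset r a) s s'"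
      using less.prems(2) s' by (auto simp: ac_child_def s'_def)
    ultimately show "\<exists>t. ac_child (Ple r) (Pset r a) s t \<and> rank_ge (ac_child (Ple r) (Pset r a)) r t c'"
      by blast
  qed
qed

lemma width_gt_from_lex_square:
  fixes E :: "nat \<Rightarrow> 'a"
  assumes E: "\<And>i j. i < j \<Longrightarrow> E i \<in> underS (E j)" and EA: "\<And>n. E n \<in> underS A"
    and g: "lex_square_strict_mono r A g" and bA: "(b, A) \<in> r"
  shows "\<exists>a\<in>Field r. width_gt (Ple r) (Pset r a) r b"
proof -
  have g_fst: "\<And>u u' v v'. u \<in> underS u' \<Longrightarrow> u' \<in> underS A \<Longrightarrow> v \<in> underS A \<Longrightarrow> v' \<in> underS A
       \<Longrightarrow> g (u, v) \<in> underS (g (u', v'))"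
    and g_snd: "\<And>u v v'. u \<in> underS A \<Longrightarrow> v \<in> underS v' \<Longrightarrow> v' \<in> underS A
       \<Longrightarrow> g (u, v) \<in> underS (g (u, v'))"
    using g unfolding lex_square_strict_mono_def by blast+
  define X where "X n = g (E 0, E n)" for n
  define G where "G c = g (E 1, c)" for c
  define y where "y = g (E 2, E 0)"
  define a where "a = g (E 3, E 0)"
  have g_row: "g (E i, v) \<in> underS (g (E j, v'))" if "i < j" "v \<in> underS A" "v' \<in> underS A"
    for i j v v'
    using g_fst[OF E[OF \<open>i < j\<close>] EA that(2,3)] .
  have ya: "y \<in> underS a" using g_row[of 2 3] EA by (simp add: y_def a_def)
  have t: "antichain_seq (Ple r) (Pset r a) [(X 0, y)]"
    using g_row[of 0 2] EA ya antichain_seq_snoc[of _ _ "[]"]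
    by (simp add: X_def y_def Pset_iff underS_def antichain_seq_def)
  have "rank_ge (ac_child (Ple r) (Pset r a)) r [(X 0, y)] b"
  proof (rule staircase_rank_ge[OF _ _ _ _ bA t])
    show "X i \<in> underS (X j)" if "i < j" for i j
      using g_snd EA E[OF that] by (simp add: X_def)
    show "G c \<in> underS (G d)" if "c \<in> underS d" "d \<in> underS A" for c d
      using g_snd EA that underS_trans by (simp add: G_def)
    show "(X i, G c) \<in> r" if "c \<in> underS A" for i c
      using g_row[of 0 1] EA that by (simp add: X_def G_def underS_def)
    show "G c \<in> underS a" if "c \<in> underS A" for c
      using g_row[of 1 3] EA that by (simp add: G_def a_def)
    show "\<forall>z\<in>set [(X 0, y)]. fst z \<in> underS (X (length [(X 0, y)]))"
      using g_snd EA E[of 0 1] by (simp add: X_def)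
    show "\<forall>z\<in>set [(X 0, y)]. \<forall>c'\<in>underS b. G c' \<in> underS (snd z)"
      using g_row[of 1 2] EA underS_under_trans bA by (simp add: G_def y_def)
  qed
  moreover have "ac_child (Ple r) (Pset r a) [] [(X 0, y)]"
    using t by (simp add: ac_child_def antichain_seq_def)
  moreover have "a \<in> Field r" using ya by (auto simp: underS_def Field_def)
  ultimately show ?thesis unfolding width_gt_def by blast
qed

end

theorem mainTheorem16:
  fixes r :: "'a rel"
  assumes "Well_order r"
    and "mult_indecomposable r"
    and "(omega_omega, r) \<in> ordLeq"
  shows "\<forall>b\<in>Field r. \<exists>a\<in>Field r. width_gt (Ple r) (Pset r a) r b"
proof
  fix b assume b: "b \<in> Field r"
  interpret wo_rel r using assms(1) by (simp add: wo_rel_def)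
  obtain E :: "nat \<Rightarrow> 'a" and W
    where E: "\<And>i j. i < j \<Longrightarrow> E i \<in> underS (E j)" and EW: "\<And>n. E n \<in> underS W"
    using omega_omega_ascending_bounded[OF assms(3)] by blast
  have W: "W \<in> Field r" using EW[of 0] by (auto simp: underS_def Field_def)
  define A where "A = max2 b W"
  have A: "A \<in> Field r" "(b, A) \<in> r" "(W, A) \<in> r"
    using max2_greater_among[OF b W] b W by (auto simp: A_def)
  obtain g where g: "lex_square_strict_mono r A g"
    using mult_indecomposable_lex_square[OF assms(2) A(1)] .
  have EA: "E n \<in> underS A" for n using EW A(3) by (rule underS_under_trans)
  show "\<exists>a\<in>Field r. width_gt (Ple r) (Pset r a) r b"
    using E EA g A(2) by (rule width_gt_from_lex_square)
qed

end
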